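(* Let $(U,\mathrm{dist})$ be a metric space, $\gamma>0$, $\eta>0$, $\Lambda\in\mathbb{R}_{>0}\cup\{\infty\}$, $p>1$, $\theta\ge1$. Let $f:U\to\mathbb{R}$ and let $B(\cdot)$ be a $g_E$-smooth upper bound on $\mathrm{L}_{f,\Lambda}$, where $g_E(x,x')=e^{\gamma\,\mathrm{dist}(x,x')}$. Then the mechanism $M$ which on input $x$ releases $M(x)=f(x)+\frac{B(x)}{\eta}Z$ with $Z\sim\mathrm{GenCauchy}(0,1,p,\theta)$ is $(\varepsilon,0,\Lambda)$-GP, where $\varepsilon=\max(\gamma,(p\theta-1)\gamma)+(p-1)^{\frac{p-1}{p}}\theta\eta$.
   Context: $\mathrm{L}_{f,\Lambda}(x)$ is the infimum of all $K$ such that $|f(x)-f(x')|\le K\,\mathrm{dist}(x,x')$ for all $x'\in U$ with $\mathrm{dist}(x,x')\le\Lambda$. For a function $g:U\times U\to\mathbb{R}_{>0}$, a $g$-smooth upper bound on $\mathrm{L}_{f,\Lambda}$ is $B:U\to\mathbb{R}_{\ge0}$ with (1) $B(x)\ge\mathrm{L}_{f,\Lambda}(x)$ for all $x$ and (2) $B(x)\le g(x,x')B(x')$ for all $x,x'\in U$. $\mathrm{GenCauchy}(0,1,p,\theta)$ (for $p>0$, $p\theta>1$) is the distribution on $\mathbb{R}$ with density $c_{p,\theta}(1+|y|^p)^{-\theta}$, $c_{p,\theta}=\frac{p\Gamma(\theta)}{2\Gamma(1/p)\Gamma(\theta-1/p)}$. A mechanism $M$ with outputs in $\mathbb{R}$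 is $(\varepsilon,\delta,\Lambda)$-GP if for every measurable $S\subseteq\mathbb{R}$ and all $x,x'\in U$ with $\mathrm{dist}(x,x')\le\Lambda$: $\Pr[M(x)\in S]\le e^{\varepsilon\,\mathrm{dist}(x,x')}\Pr[M(x')\in S]+\delta$. *)

theory Defs
  imports "HOL-Probability.Probability"
begin

text \<open>Local Lipschitz constant L_{f,Lambda}(x), as an extended real
  (infimum over the empty set is +infinity).  Lambda is an extended real
  (Lambda = infinity allowed).\<close>
definition local_lip :: "('a::metric_space \<Rightarrow> real) \<Rightarrow> ereal \<Rightarrow> 'a \<Rightarrow> ereal" where
  "local_lip f \<Lambda> x = Inf {ereal K | K. \<forall>x'. ereal (dist x x') \<le> \<Lambda> \<longrightarrow>
                                  \<bar>f x - f x'\<bar> \<le> K * dist x x'}"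

definition smooth_upper_bound ::
  "('a::metric_space \<Rightarrow> 'a \<Rightarrow> real) \<Rightarrow> ('a \<Rightarrow> real) \<Rightarrow> ereal \<Rightarrow> ('a \<Rightarrow> real) \<Rightarrow> bool" where
  "smooth_upper_bound g f \<Lambda> B \<longleftrightarrow>
     (\<forall>x. B x \<ge> 0) \<and>
     (\<forall>x. ereal (B x) \<ge> local_lip f \<Lambda> x) \<and>
     (\<forall>x x'. B x \<le> g x x' * B x')"

definition gc_const :: "real \<Rightarrow> real \<Rightarrow> real" where
  "gc_const p \<theta> = p * Gamma \<theta> / (2 * Gamma (1 / p) * Gamma (\<theta> - 1 / p))"

definition GenCauchy :: "real \<Rightarrow> real \<Rightarrow> real measure" where
  "GenCauchy p \<theta> = density lborel
     (\<lambda>y. ennreal (gc_const p \<theta> * (1 + \<bar>y\<bar> powr p) powr (- \<theta>)))"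

definition gc_mechanism ::
  "('a \<Rightarrow> real) \<Rightarrow> ('a \<Rightarrow> real) \<Rightarrow> real \<Rightarrow> real \<Rightarrow> real \<Rightarrow> 'a \<Rightarrow> real measure" where
  "gc_mechanism f B \<eta> p \<theta> x = distr (GenCauchy p \<theta>) borel (\<lambda>z. f x + B x / \<eta> * z)"

definition GP :: "('a::metric_space \<Rightarrow> real measure) \<Rightarrow> real \<Rightarrow> real \<Rightarrow> ereal \<Rightarrow> bool" where
  "GP M \<epsilon> \<delta> \<Lambda> \<longleftrightarrow>
     (\<forall>S \<in> sets borel. \<forall>x x'. ereal (dist x x') \<le> \<Lambda> \<longrightarrow>
        measure (M x) S \<le> exp (\<epsilon> * dist x x') * measure (M x') S + \<delta>)"

end

theory Submission
  imports Defs
begin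

(* The law of f x + (B x / eta) Z is the location-scale density y |-> (eta / B x) h (eta (y - f x) / B x),
   where ln h w = const - theta ln (1 + |w|^p); GP therefore reduces to a pointwise bound on the ratio
   of two such densities.  The map w |-> ln (1 + |w|^p) is (p-1)^((p-1)/p)-Lipschitz, since Young's
   inequality bounds its derivative p t^(p-1) / (1 + t^p).  As |f x - f x'| <= B x dist x x', moving the
   location costs at most theta (p-1)^((p-1)/p) eta dist x x'; as |ln s| <= gamma dist x x' for the
   scale ratio s = B x / B x', rescaling costs at most theta max 0 (p ln s) - ln s
   <= max gamma ((p theta - 1) gamma) dist x x'.  If B vanishes anywhere, smoothness forces B = 0,
   so f is constant on Lambda-balls and the mechanism takes the same value at x and x'. *)

lemma powr_deriv_le_young:
  fixes p z :: real
  assumes p: "1 < p" and z: "0 < z"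
  shows "p * z powr (p - 1) \<le> (p - 1) powr ((p - 1) / p) * (1 + z powr p)"
proof -
  define L where "L = (p - 1) powr ((p - 1) / p)"
  have L: "0 < L" using p by (simp add: L_def)
  have "p powr (1 / p) * (p * z powr p / (p - 1)) powr ((p - 1) / p)
      \<le> 1 / p * p + (p - 1) / p * (p * z powr p / (p - 1))"
    using p z by (intro Youngs_inequality_0) (auto simp: field_simps)
  also have "\<dots> = 1 + z powr p" using p by (simp add: field_simps)
  also have "p powr (1 / p) * (p * z powr p / (p - 1)) powr ((p - 1) / p)
      = p powr (1 / p + (p - 1) / p) * (z powr p) powr ((p - 1) / p) / L"
    using p z by (simp add: L_def powr_mult powr_divide powr_add)
  also have "\<dots> = p * z powr (p - 1) / L"
    using p z by (simp add: powr_powr add_divide_distrib[symmetric])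
  finally show ?thesis using L by (simp add: L_def divide_le_eq mult.commute)
qed

lemma ln_one_plus_powr_lipschitz:
  fixes p r r' :: real
  assumes p: "1 < p" and r: "0 \<le> r" "r \<le> r'"
  shows "ln (1 + r' powr p) - ln (1 + r powr p) \<le> (p - 1) powr ((p - 1) / p) * (r' - r)"
proof (cases "r = r'")
  case False
  define \<psi> where "\<psi> = (\<lambda>t. ln (1 + t powr p))"
  have deriv: "(\<psi> has_real_derivative p * t powr (p - 1) / (1 + t powr p)) (at t)" if "0 < t" for t
  proof -
    have "0 < 1 + t powr p" by (simp add: add_pos_nonneg)
    moreover have "((\<lambda>t. 1 + t powr p) has_real_derivative 0 + p * t powr (p - 1)) (at t)"
      by (intro DERIV_add DERIV_const has_real_derivative_powr that)
    ultimately have "(\<psi> has_real_derivative 1 / (1 + t powr p) * (0 + p * t powr (p - 1))) (at t)"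
      unfolding \<psi>_def by (rule DERIV_chain2[OF DERIV_ln_divide])
    then show ?thesis by simp
  qed
  have "continuous_on {r..r'} (\<lambda>t. t powr p)"
    using r p by (intro continuous_on_powr') (auto intro: continuous_intros)
  then have "continuous_on {r..r'} \<psi>"
    unfolding \<psi>_def
    by (intro continuous_on_ln continuous_on_add continuous_on_const) (auto simp: add_nonneg_eq_0_iff)
  moreover have "\<psi> differentiable (at t)" if "r < t" for t
    using deriv[of t] that r real_differentiable_def by auto
  ultimately obtain l t where t: "r < t" "t < r'" and "(\<psi> has_real_derivative l) (at t)"
    and mvt: "\<psi> r' - \<psi> r = (r' - r) * l"
    using MVT[of r r' \<psi>] False r by auto
  moreover have "0 < t" using t r by simp
  ultimately have "l = p * t powr (p - 1) / (1 + t powr p)"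
    using DERIV_unique deriv by blast
  also have "\<dots> \<le> (p - 1) powr ((p - 1) / p)"
    using powr_deriv_le_young[OF p \<open>0 < t\<close>] by (simp add: divide_le_eq add_pos_nonneg)
  finally show ?thesis
    using mvt t by (simp add: \<psi>_def mult.commute mult_left_mono)
qed simp

lemma ln_one_plus_abs_powr_lipschitz:
  fixes p a b :: real
  assumes p: "1 < p"
  shows "ln (1 + \<bar>a\<bar> powr p) - ln (1 + \<bar>b\<bar> powr p) \<le> (p - 1) powr ((p - 1) / p) * \<bar>a - b\<bar>"
proof (cases "\<bar>b\<bar> \<le> \<bar>a\<bar>")
  case True
  have "ln (1 + \<bar>a\<bar> powr p) - ln (1 + \<bar>b\<bar> powr p) \<le> (p - 1) powr ((p - 1) / p) * (\<bar>a\<bar> - \<bar>b\<bar>)"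
    using ln_one_plus_powr_lipschitz[OF p _ True] by simp
  also have "\<dots> \<le> (p - 1) powr ((p - 1) / p) * \<bar>a - b\<bar>"
    by (intro mult_left_mono) auto
  finally show ?thesis .
next
  case False
  then have "\<bar>a\<bar> powr p \<le> \<bar>b\<bar> powr p"
    using p by (intro powr_mono2) auto
  then have "ln (1 + \<bar>a\<bar> powr p) - ln (1 + \<bar>b\<bar> powr p) \<le> 0"
    by (simp add: add_pos_nonneg)
  also have "0 \<le> (p - 1) powr ((p - 1) / p) * \<bar>a - b\<bar>"
    by simp
  finally show ?thesis .
qed

lemma ln_one_plus_abs_powr_scale:
  fixes p s w :: real
  assumes s: "0 < s"
  shows "ln (1 + \<bar>s * w\<bar> powr p) - ln (1 + \<bar>w\<bar> powr p) \<le> max 0 (p * ln s)"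
proof -
  have pos: "0 < 1 + \<bar>w\<bar> powr p" by (simp add: add_pos_nonneg)
  have "1 + \<bar>s * w\<bar> powr p \<le> max 1 (s powr p) * (1 + \<bar>w\<bar> powr p)"
    using s by (simp add: abs_mult powr_mult max_def algebra_simps mult_left_le_one_le)
  then have "ln (1 + \<bar>s * w\<bar> powr p) \<le> ln (max 1 (s powr p) * (1 + \<bar>w\<bar> powr p))"
    using pos by (simp add: add_pos_nonneg)
  also have "\<dots> = ln (max 1 (s powr p)) + ln (1 + \<bar>w\<bar> powr p)"
    using pos by (intro ln_mult_pos) auto
  also have "ln (max 1 (s powr p)) = max 0 (p * ln s)"
    using s by (simp add: powr_def max_def)
  finally show ?thesis by simp
qed

lemma gc_const_pos:
  assumes p: "0 < p" and p\<theta>: "1 < p * \<theta>"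
  shows "0 < gc_const p \<theta>"
proof -
  have "0 < \<theta>"
    using zero_less_mult_pos[of p \<theta>] p p\<theta> by simp
  moreover have "0 < \<theta> - 1 / p"
    using p p\<theta> by (simp add: field_simps)
  ultimately show ?thesis
    unfolding gc_const_def using p by (simp add: Gamma_real_pos)
qed

definition gc_scaled_density :: "real \<Rightarrow> real \<Rightarrow> real \<Rightarrow> real \<Rightarrow> real \<Rightarrow> real" where
  "gc_scaled_density p \<theta> \<mu> \<sigma> y = gc_const p \<theta> / \<sigma> * (1 + \<bar>(y - \<mu>) / \<sigma>\<bar> powr p) powr (- \<theta>)"

lemma gc_scaled_density_le:
  fixes p \<theta> a r \<mu> \<mu>' \<sigma> \<sigma>' y :: real
  assumes p: "1 < p" and p\<theta>: "1 < p * \<theta>" and \<sigma>: "0 < \<sigma>" and \<sigma>': "0 < \<sigma>'"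
    and shift: "\<bar>\<mu> - \<mu>'\<bar> \<le> a * \<sigma>" and scale: "\<sigma> \<le> exp r * \<sigma>'" "\<sigma>' \<le> exp r * \<sigma>"
  shows "gc_scaled_density p \<theta> \<mu> \<sigma> y
       \<le> exp (max r ((p * \<theta> - 1) * r) + (p - 1) powr ((p - 1) / p) * \<theta> * a) * gc_scaled_density p \<theta> \<mu>' \<sigma>' y"
proof -
  define \<phi> where "\<phi> w = ln (1 + \<bar>w\<bar> powr p)" for w
  define L where "L = (p - 1) powr ((p - 1) / p)"
  define s where "s = \<sigma> / \<sigma>'"
  define u v w where "u = (y - \<mu>) / \<sigma>" and "v = (y - \<mu>') / \<sigma>'" and "w = (y - \<mu>') / \<sigma>"
  have \<theta>: "0 < \<theta>"
    using zero_less_mult_pos[of p \<theta>] p p\<theta> by simp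
  have density_exp: "gc_scaled_density p \<theta> m t y = exp (ln (gc_const p \<theta>) - ln t - \<theta> * \<phi> ((y - m) / t))"
    if "0 < t" for m t
  proof -
    define X where "X = 1 + \<bar>(y - m) / t\<bar> powr p"
    have "0 < X"
      by (simp add: X_def add_pos_nonneg)
    then have "X powr (- \<theta>) = exp (- (\<theta> * ln X))"
      by (simp add: powr_def)
    moreover have "gc_const p \<theta> / t = exp (ln (gc_const p \<theta>) - ln t)"
      using that gc_const_pos[of p \<theta>] p p\<theta> by (simp add: exp_diff)
    ultimately show ?thesis
      unfolding gc_scaled_density_def \<phi>_def X_def[symmetric]
      by (simp add: exp_diff exp_minus divide_inverse)
  qed
  have ln_s: "ln s = ln \<sigma> - ln \<sigma>'" "- r \<le> ln s" "ln s \<le> r"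
    using \<sigma> \<sigma>' scale by (simp_all add: s_def ln_div ln_mult_pos flip: ln_le_cancel_iff)
  have "\<phi> w - \<phi> u \<le> L * \<bar>w - u\<bar>"
    unfolding \<phi>_def L_def by (rule ln_one_plus_abs_powr_lipschitz[OF p])
  also have "\<bar>w - u\<bar> \<le> a"
    using shift \<sigma> by (simp add: u_def w_def abs_minus_commute divide_le_eq flip: diff_divide_distrib)
  finally have shift_bound: "\<phi> w - \<phi> u \<le> L * a"
    by (simp add: L_def mult_left_mono order_trans)
  have "v = s * w"
    using \<sigma> \<sigma>' by (simp add: v_def s_def w_def)
  then have scale_bound: "\<phi> v - \<phi> w \<le> max 0 (p * ln s)"
    unfolding \<phi>_def using \<sigma> \<sigma>' by (simp only:) (rule ln_one_plus_abs_powr_scale, simp add: s_def)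
  have "\<theta> * max 0 (p * ln s) - ln s \<le> max r ((p * \<theta> - 1) * r)"
  proof (cases "0 \<le> ln s")
    case True
    then have "\<theta> * max 0 (p * ln s) - ln s = (p * \<theta> - 1) * ln s"
      using p by (simp add: max_def algebra_simps)
    also have "\<dots> \<le> (p * \<theta> - 1) * r"
      using p\<theta> ln_s by (intro mult_left_mono) auto
    finally show ?thesis by simp
  next
    case False
    then have "max 0 (p * ln s) = 0"
      using p by (simp add: mult_pos_neg)
    then show ?thesis
      using ln_s(2) by simp
  qed
  moreover have "\<theta> * (\<phi> v - \<phi> w) \<le> \<theta> * max 0 (p * ln s)"
    using scale_bound \<theta> by (intro mult_left_mono) auto
  moreover have "\<theta> * (\<phi> w - \<phi> u) \<le> \<theta> * (L * a)"
    using shift_bound \<theta> by (intro mult_left_mono) auto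
  ultimately have "\<theta> * (\<phi> v - \<phi> u) - ln s \<le> max r ((p * \<theta> - 1) * r) + L * \<theta> * a"
    by (simp add: algebra_simps)
  then show ?thesis
    using \<sigma> \<sigma>' by (simp add: density_exp ln_s(1) L_def u_def v_def algebra_simps flip: exp_add)
qed

lemma nn_integral_powr_tail_finite:
  fixes q :: real
  assumes "1 < q"
  shows "(\<integral>\<^sup>+ z. ennreal (z powr (- q)) * indicator {1..} z \<partial>lborel) < \<infinity>"
proof -
  have "((\<lambda>z. z powr (- q)) has_integral - (1 powr (- q + 1)) / (- q + 1)) {1..}"
    using assms by (intro has_integral_powr_to_inf) auto
  then show ?thesis
    by (subst nn_integral_has_integral_lebesgue') auto
qed

lemma one_plus_abs_powr_powr_le:
  fixes p \<theta> y :: real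
  assumes "0 < p" and "0 < \<theta>"
  shows "(1 + \<bar>y\<bar> powr p) powr (- \<theta>) \<le> indicator {-1..1} y
           + indicator {1..} y * y powr (- (p * \<theta>)) + indicator {1..} (- y) * (- y) powr (- (p * \<theta>))"
proof -
  have tail: "(1 + \<bar>y\<bar> powr p) powr (- \<theta>) \<le> \<bar>y\<bar> powr (- (p * \<theta>))" if "1 \<le> \<bar>y\<bar>"
  proof -
    have "(1 + \<bar>y\<bar> powr p) powr (- \<theta>) \<le> (\<bar>y\<bar> powr p) powr (- \<theta>)"
      using assms that by (intro powr_mono2') auto
    then show ?thesis
      by (simp add: powr_powr)
  qed
  have "(1 + \<bar>y\<bar> powr p) powr (- \<theta>) \<le> (1 + \<bar>y\<bar> powr p) powr 0"
    using assms by (intro powr_mono) auto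
  then have "(1 + \<bar>y\<bar> powr p) powr (- \<theta>) \<le> 1"
    by (simp add: add_nonneg_eq_0_iff)
  then show ?thesis
    using tail by (cases "\<bar>y\<bar> \<le> 1"; cases "0 \<le> y") (auto simp: indicator_def)
qed

lemma finite_measure_GenCauchy:
  assumes p: "0 < p" and p\<theta>: "1 < p * \<theta>"
  shows "finite_measure (GenCauchy p \<theta>)"
proof
  define c where "c = gc_const p \<theta>"
  have c: "0 < c"
    unfolding c_def using gc_const_pos[OF p p\<theta>] .
  have \<theta>: "0 < \<theta>"
    using zero_less_mult_pos[of p \<theta>] p p\<theta> by simp
  define F where "F = (\<lambda>z::real. ennreal (z powr (- (p * \<theta>))) * indicator {1..} z)"
  have [measurable]: "F \<in> borel_measurable borel"
    unfolding F_def by measurable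
  have "integral\<^sup>N lborel F < \<infinity>"
    unfolding F_def using nn_integral_powr_tail_finite[OF p\<theta>] .
  moreover have "integral\<^sup>N lborel (\<lambda>z. F (- z)) = integral\<^sup>N lborel F"
    using nn_integral_real_affine[of F "- 1" 0] by simp
  moreover have "emeasure lborel {-1..1::real} = 2"
    by simp
  ultimately have bound: "(\<integral>\<^sup>+ y. ennreal c * (indicator {-1..1} y + F y + F (- y)) \<partial>lborel) < \<infinity>"
    by (simp add: nn_integral_cmult nn_integral_add ennreal_mult_less_top)
  have "emeasure (GenCauchy p \<theta>) (space (GenCauchy p \<theta>))
      = (\<integral>\<^sup>+ y. ennreal (c * (1 + \<bar>y\<bar> powr p) powr (- \<theta>)) \<partial>lborel)"
    by (simp add: GenCauchy_def c_def emeasure_density)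
  also have "\<dots> \<le> (\<integral>\<^sup>+ y. ennreal c * (indicator {-1..1} y + F y + F (- y)) \<partial>lborel)"
  proof (rule nn_integral_mono)
    fix y :: real
    have "c * (1 + \<bar>y\<bar> powr p) powr (- \<theta>) \<le> c * (indicator {-1..1} y
           + indicator {1..} y * y powr (- (p * \<theta>)) + indicator {1..} (- y) * (- y) powr (- (p * \<theta>)))"
      using one_plus_abs_powr_powr_le[OF p \<theta>] c by (intro mult_left_mono) auto
    then have "ennreal (c * (1 + \<bar>y\<bar> powr p) powr (- \<theta>)) \<le> ennreal (c * (indicator {-1..1} y
           + indicator {1..} y * y powr (- (p * \<theta>)) + indicator {1..} (- y) * (- y) powr (- (p * \<theta>))))"
      by (rule ennreal_leI)
    also have "\<dots> = ennreal c * (indicator {-1..1} y + F y + F (- y))"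
      using c by (simp add: F_def ennreal_mult ennreal_plus indicator_mult_ennreal[symmetric] mult.commute
                   flip: ennreal_indicator)
    finally show "ennreal (c * (1 + \<bar>y\<bar> powr p) powr (- \<theta>))
        \<le> ennreal c * (indicator {-1..1} y + F y + F (- y))" .
  qed
  finally show "emeasure (GenCauchy p \<theta>) (space (GenCauchy p \<theta>)) \<noteq> \<infinity>"
    using bound by (auto simp: top_unique)
qed

lemma distr_density_lborel_affine:
  fixes g :: "real \<Rightarrow> ennreal" and \<mu> \<sigma> :: real
  assumes [measurable]: "g \<in> borel_measurable borel" and \<sigma>: "0 < \<sigma>"
  shows "distr (density lborel g) borel (\<lambda>z. \<mu> + \<sigma> * z)
       = density lborel (\<lambda>y. ennreal (1 / \<sigma>) * g ((y - \<mu>) / \<sigma>))"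
proof -
  have lborel_eq: "lborel = density (distr lborel borel (\<lambda>y. (y - \<mu>) / \<sigma>)) (\<lambda>_. ennreal (1 / \<sigma>))"
    using lborel_real_affine[of "1 / \<sigma>" "- \<mu> / \<sigma>"] \<sigma> by (simp add: diff_divide_distrib)
  have "density lborel g = density (distr lborel borel (\<lambda>y. (y - \<mu>) / \<sigma>)) (\<lambda>z. ennreal (1 / \<sigma>) * g z)"
    by (subst lborel_eq) (simp add: density_density_eq)
  then have "distr (density lborel g) lborel (\<lambda>z. \<mu> + \<sigma> * z)
      = density lborel ((\<lambda>z. ennreal (1 / \<sigma>) * g z) \<circ> (\<lambda>y. (y - \<mu>) / \<sigma>))"
    using \<sigma> by (simp only:) (intro distr_density_distr, auto)
  moreover have "distr (density lborel g) borel (\<lambda>z. \<mu> + \<sigma> * z)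
      = distr (density lborel g) lborel (\<lambda>z. \<mu> + \<sigma> * z)"
    by (rule distr_cong) auto
  ultimately show ?thesis
    by (simp add: comp_def)
qed

lemma distr_GenCauchy_affine:
  assumes "0 < \<sigma>"
  shows "distr (GenCauchy p \<theta>) borel (\<lambda>z. \<mu> + \<sigma> * z)
       = density lborel (\<lambda>y. ennreal (gc_scaled_density p \<theta> \<mu> \<sigma> y))"
  unfolding GenCauchy_def using assms
  by (simp add: distr_density_lborel_affine gc_scaled_density_def ennreal_mult'[symmetric])

lemma measure_density_le:
  fixes g h :: "'a \<Rightarrow> real"
  assumes [measurable]: "g \<in> borel_measurable M" "h \<in> borel_measurable M"
    and le: "\<And>x. x \<in> space M \<Longrightarrow> g x \<le> e * h x" and e: "0 \<le> e"
    and fin: "finite_measure (density M (\<lambda>x. ennreal (h x)))" and S: "S \<in> sets M"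
  shows "measure (density M (\<lambda>x. ennreal (g x))) S \<le> e * measure (density M (\<lambda>x. ennreal (h x))) S"
proof -
  have "emeasure (density M (\<lambda>x. ennreal (g x))) S = (\<integral>\<^sup>+ x. ennreal (g x) * indicator S x \<partial>M)"
    using S by (simp add: emeasure_density)
  also have "\<dots> \<le> (\<integral>\<^sup>+ x. ennreal e * (ennreal (h x) * indicator S x) \<partial>M)"
    using le e by (intro nn_integral_mono) (auto simp: indicator_def ennreal_mult'[symmetric] intro!: ennreal_leI)
  also have "\<dots> = ennreal e * emeasure (density M (\<lambda>x. ennreal (h x))) S"
    using S by (simp add: emeasure_density nn_integral_cmult)
  finally have emeasure_le: "emeasure (density M (\<lambda>x. ennreal (g x))) S
      \<le> ennreal e * emeasure (density M (\<lambda>x. ennreal (h x))) S" .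
  have "measure (density M (\<lambda>x. ennreal (g x))) S
      \<le> enn2real (ennreal e * emeasure (density M (\<lambda>x. ennreal (h x))) S)"
    unfolding measure_def using finite_measure.emeasure_finite[OF fin]
    by (intro enn2real_mono[OF emeasure_le]) (simp add: ennreal_mult_less_top less_top)
  also have "\<dots> = e * measure (density M (\<lambda>x. ennreal (h x))) S"
    using e by (simp add: enn2real_mult measure_def)
  finally show ?thesis .
qed

lemma measure_GenCauchy_affine_le:
  fixes p \<theta> a r \<mu> \<mu>' \<sigma> \<sigma>' :: real
  assumes p: "1 < p" and p\<theta>: "1 < p * \<theta>" and \<sigma>: "0 < \<sigma>" and \<sigma>': "0 < \<sigma>'"
    and shift: "\<bar>\<mu> - \<mu>'\<bar> \<le> a * \<sigma>" and scale: "\<sigma> \<le> exp r * \<sigma>'" "\<sigma>' \<le> exp r * \<sigma>"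
    and S: "S \<in> sets borel"
  shows "measure (distr (GenCauchy p \<theta>) borel (\<lambda>z. \<mu> + \<sigma> * z)) S
       \<le> exp (max r ((p * \<theta> - 1) * r) + (p - 1) powr ((p - 1) / p) * \<theta> * a)
           * measure (distr (GenCauchy p \<theta>) borel (\<lambda>z. \<mu>' + \<sigma>' * z)) S"
proof -
  have "finite_measure (distr (GenCauchy p \<theta>) borel (\<lambda>z. \<mu>' + \<sigma>' * z))"
    using p p\<theta> by (intro finite_measure.finite_measure_distr finite_measure_GenCauchy) (auto simp: GenCauchy_def)
  then show ?thesis
    unfolding distr_GenCauchy_affine[OF \<sigma>] distr_GenCauchy_affine[OF \<sigma>'] using S
    by (intro measure_density_le gc_scaled_density_le[OF p p\<theta> \<sigma> \<sigma>' shift scale])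
       (auto simp: gc_scaled_density_def)
qed

lemma gc_mechanism_measure_le:
  fixes f B :: "'a \<Rightarrow> real" and \<gamma> \<eta> p \<theta> d :: real
  assumes p: "1 < p" and p\<theta>: "1 < p * \<theta>" and \<eta>: "0 < \<eta>" and d: "0 \<le> d"
    and B: "0 < B x" "0 < B x'" "B x \<le> exp (\<gamma> * d) * B x'" "B x' \<le> exp (\<gamma> * d) * B x"
    and lip: "\<bar>f x - f x'\<bar> \<le> B x * d" and S: "S \<in> sets borel"
  shows "measure (gc_mechanism f B \<eta> p \<theta> x) S
       \<le> exp ((max \<gamma> ((p * \<theta> - 1) * \<gamma>) + (p - 1) powr ((p - 1) / p) * \<theta> * \<eta>) * d)
           * measure (gc_mechanism f B \<eta> p \<theta> x') S"
proof -
  have "max \<gamma> ((p * \<theta> - 1) * \<gamma>) * d = max (\<gamma> * d) ((p * \<theta> - 1) * (\<gamma> * d))"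
    using d by (simp add: max_mult_distrib_right mult.assoc)
  then have exponent: "(max \<gamma> ((p * \<theta> - 1) * \<gamma>) + (p - 1) powr ((p - 1) / p) * \<theta> * \<eta>) * d
      = max (\<gamma> * d) ((p * \<theta> - 1) * (\<gamma> * d)) + (p - 1) powr ((p - 1) / p) * \<theta> * (\<eta> * d)"
    by (simp add: distrib_right mult.assoc)
  have shift: "\<bar>f x - f x'\<bar> \<le> (\<eta> * d) * (B x / \<eta>)"
    using lip \<eta> by (simp add: mult.commute)
  have scale: "B x / \<eta> \<le> exp (\<gamma> * d) * (B x' / \<eta>)" "B x' / \<eta> \<le> exp (\<gamma> * d) * (B x / \<eta>)"
    using B \<eta> by (simp_all add: divide_right_mono)
  show ?thesis
    unfolding gc_mechanism_def exponent
    by (rule measure_GenCauchy_affine_le[OF p p\<theta> _ _ shift scale S]) (use B \<eta> in simp_all)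
qed

lemma local_lip_bound:
  fixes f :: "'a::metric_space \<Rightarrow> real"
  assumes "local_lip f \<Lambda> x \<le> ereal K" and "ereal (dist x x') \<le> \<Lambda>"
  shows "\<bar>f x - f x'\<bar> \<le> K * dist x x'"
proof (cases "x = x'")
  case False
  then have d: "dist x x' > 0" by simp
  have "ereal (\<bar>f x - f x'\<bar> / dist x x') \<le> local_lip f \<Lambda> x"
    unfolding local_lip_def
  proof (rule Inf_greatest, clarify)
    fix K' assume "\<forall>x'. ereal (dist x x') \<le> \<Lambda> \<longrightarrow> \<bar>f x - f x'\<bar> \<le> K' * dist x x'"
    with assms(2) d show "ereal (\<bar>f x - f x'\<bar> / dist x x') \<le> ereal K'"
      by (simp add: divide_le_eq)
  qed
  then have "\<bar>f x - f x'\<bar> / dist x x' \<le> K"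
    using assms(1) by (metis ereal_less_eq(3) order_trans)
  with d show ?thesis by (simp add: divide_le_eq)
qed simp

lemma smooth_upper_bound_exp_pos_or_zero:
  assumes "smooth_upper_bound (\<lambda>x x'. exp (\<gamma> * dist x x')) f \<Lambda> B"
  shows "(\<forall>x. 0 < B x) \<or> (\<forall>x. B x = 0)"
  using assms unfolding smooth_upper_bound_def
  by (metis less_eq_real_def mult_zero_right order_antisym)

theorem mainTheorem3:
  fixes f B :: "'a::metric_space \<Rightarrow> real"
    and \<gamma> \<eta> p \<theta> :: real and \<Lambda> :: ereal
  assumes "\<gamma> > 0" and "\<eta> > 0" and "\<Lambda> > 0" and "p > 1" and "\<theta> \<ge> 1"
    and "smooth_upper_bound (\<lambda>x x'. exp (\<gamma> * dist x x')) f \<Lambda> B"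
  shows "GP (gc_mechanism f B \<eta> p \<theta>)
            (max \<gamma> ((p * \<theta> - 1) * \<gamma>) + (p - 1) powr ((p - 1) / p) * \<theta> * \<eta>) 0 \<Lambda>"
proof -
  define \<epsilon> where "\<epsilon> = max \<gamma> ((p * \<theta> - 1) * \<gamma>) + (p - 1) powr ((p - 1) / p) * \<theta> * \<eta>"
  have "p \<le> p * \<theta>"
    using assms(4,5) mult_left_mono[of 1 \<theta> p] by simp
  then have p\<theta>: "1 < p * \<theta>"
    using assms(4) by linarith
  have \<epsilon>: "0 \<le> \<epsilon>"
    using assms(1,2,5) by (simp add: \<epsilon>_def)
  from assms(6) have B: "\<And>x x'. B x \<le> exp (\<gamma> * dist x x') * B x'"
    and lip: "\<And>x x'. ereal (dist x x') \<le> \<Lambda> \<Longrightarrow> \<bar>f x - f x'\<bar> \<le> B x * dist x x'"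
    unfolding smooth_upper_bound_def by (auto intro: local_lip_bound)
  have "measure (gc_mechanism f B \<eta> p \<theta> x) S
      \<le> exp (\<epsilon> * dist x x') * measure (gc_mechanism f B \<eta> p \<theta> x') S"
    if S: "S \<in> sets borel" and d: "ereal (dist x x') \<le> \<Lambda>" for S x x'
    using smooth_upper_bound_exp_pos_or_zero[OF assms(6)]
  proof
    assume "\<forall>x. 0 < B x"
    then show ?thesis
      unfolding \<epsilon>_def using assms(2,4) p\<theta> B[of x x'] B[of x' x] lip[OF d] S
      by (intro gc_mechanism_measure_le) (auto simp: dist_commute)
  next
    assume "\<forall>x. B x = 0"
    then have "gc_mechanism f B \<eta> p \<theta> x = gc_mechanism f B \<eta> p \<theta> x'"
      using lip[OF d] by (simp add: gc_mechanism_def)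
    then show ?thesis
      using \<epsilon> by (simp add: mult_le_cancel_right1)
  qed
  then show ?thesis
    unfolding GP_def \<epsilon>_def by simp
qed

end
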